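(* There is a constant $C>0$ depending only on the dimension $d$ such that for every $0<\lambda<1$, every Borel set $E\subset\mathbb{R}^d$ and every $x\in\mathbb{R}^d$, $$\chi_{\{M\chi_E>\lambda\}}(x)\le \frac{C}{\lambda(1-\log\lambda)}\,M\big(\chi_{\{M\chi_E>\lambda\}}\,M\chi_E\big)(x).$$
   Context: $M$ denotes the Hardy–Littlewood maximal operator on $\mathbb{R}^d$: $Mf(x)=\sup_{Q\ni x}\frac{1}{|Q|}\int_Q|f(y)|\,dy$, the supremum over all cubes $Q$ containing $x$. *)

theory Defs
  imports "HOL-Analysis.Analysis"
begin

definition cubes :: "'a::euclidean_space set set" where
  "cubes = {cbox a (a + s *\<^sub>R One) | a s. s > 0}"

text \<open>Hardy--Littlewood maximal operator over cubes containing the point,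
  for nonnegative (ennreal-valued) functions, i.e. acting on the modulus.\<close>
definition hl_max :: "('a::euclidean_space \<Rightarrow> ennreal) \<Rightarrow> 'a \<Rightarrow> ennreal" where
  "hl_max f x = (SUP Q \<in> {Q \<in> cubes. x \<in> Q}.
      (\<integral>\<^sup>+ y. f y * indicator Q y \<partial>lborel) / emeasure lborel Q)"

end

(* If M chi_E (x) > lambda, some cube Q containing x has |E cap Q| > lambda |Q|, and M chi_E > lambda on
   all of Q; averaging the truncated function over Q already gives lambda.  For each dyadic height
   2^-k between lambda and 1, a Calderon-Zygmund decomposition of E cap Q at height 2^-k (or, if E is
   too dense for that, a dyadic enlargement of Q) produces a set A_k with M chi_E > 2^-k on A_k and
   |A_k| >= 2^(k-d) |E cap Q|, all inside one cube R with |R| <= 2^d |E cap Q| / lambda.  The layers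
   2^(-k-1) chi_(A_k) sum to at most the truncated function, so its average over R is at least a
   dimensional multiple of N lambda, where N ~ log_2 (1/lambda) counts the heights.  Adding the two
   bounds gives lambda (1 - log lambda) up to a constant.  The Calderon-Zygmund step needs that
   almost every point of E cap Q lies in a dyadic cube where E has density > 2^-k; this weak density
   theorem follows from outer regularity of Lebesgue measure. *)
theory Submission
  imports Defs
begin

section \<open>Dyadic cubes\<close>

definition dyadic_index :: "'a::euclidean_space \<Rightarrow> real \<Rightarrow> nat \<Rightarrow> 'a \<Rightarrow> 'a \<Rightarrow> int" where
  "dyadic_index q s k y = restrict (\<lambda>b. \<lfloor>(y \<bullet> b - q \<bullet> b) / (s / 2^k)\<rfloor>) Basis"

text \<open>The cube of side \<open>s / 2^k\<close> of the dyadic grid anchored at \<open>q\<close> that contains \<open>y\<close>.\<close>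
definition dyadic_cube :: "'a::euclidean_space \<Rightarrow> real \<Rightarrow> nat \<Rightarrow> 'a \<Rightarrow> 'a set" where
  "dyadic_cube q s k y = {w. dyadic_index q s k w = dyadic_index q s k y}"

definition half_open_cube :: "'a::euclidean_space \<Rightarrow> real \<Rightarrow> 'a set" where
  "half_open_cube c h = {w. \<forall>b\<in>Basis. c \<bullet> b \<le> w \<bullet> b \<and> w \<bullet> b < c \<bullet> b + h}"

lemma dyadic_cube_self: "y \<in> dyadic_cube q s k y"
  by (simp add: dyadic_cube_def)

lemma dyadic_cube_eq: "w \<in> dyadic_cube q s k y \<Longrightarrow> dyadic_cube q s k w = dyadic_cube q s k y"
  by (simp add: dyadic_cube_def)

lemma dyadic_cube_Suc_subset:
  assumes "s > 0"
  shows "dyadic_cube q s (Suc k) y \<subseteq> dyadic_cube q s k y"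
proof
  fix w assume w: "w \<in> dyadic_cube q s (Suc k) y"
  have "v / (s / 2^k) = (v / (s / 2^Suc k)) / 2" for v :: real
    using assms by (simp add: field_simps)
  then have "\<lfloor>v / (s / 2^k)\<rfloor> = \<lfloor>v / (s / 2^Suc k)\<rfloor> div 2" for v :: real
    by (metis floor_divide_real_eq_div of_int_numeral zero_le_numeral)
  with w show "w \<in> dyadic_cube q s k y"
    by (simp add: dyadic_cube_def dyadic_index_def restrict_def fun_eq_iff) metis
qed

lemma dyadic_cube_antimono:
  assumes "s > 0" "k \<le> k'"
  shows "dyadic_cube q s k' y \<subseteq> dyadic_cube q s k y"
  using assms(2)
proof (induction k' rule: dec_induct)
  case (step n)
  then show ?case using dyadic_cube_Suc_subset[OF assms(1)] by blast
qed simp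

lemma dyadic_cube_eq_half_open_cube:
  assumes "s > 0"
  shows "dyadic_cube q s k y = half_open_cube
    (\<Sum>b\<in>Basis. (q \<bullet> b + of_int \<lfloor>(y \<bullet> b - q \<bullet> b) / (s / 2^k)\<rfloor> * (s / 2^k)) *\<^sub>R b) (s / 2^k)"
    (is "_ = half_open_cube ?c ?h")
proof -
  have h: "?h > 0" using assms by simp
  have c: "?c \<bullet> b = q \<bullet> b + of_int \<lfloor>(y \<bullet> b - q \<bullet> b) / ?h\<rfloor> * ?h" if "b \<in> Basis" for b
    using that by (simp add: inner_sum_left inner_Basis if_distrib cong: if_cong)
  have fl: "\<lfloor>v / ?h\<rfloor> = n \<longleftrightarrow> of_int n * ?h \<le> v \<and> v < of_int n * ?h + ?h" for v n
    using h by (simp add: floor_eq_iff field_simps)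
  have "\<lfloor>(w \<bullet> b - q \<bullet> b) / ?h\<rfloor> = \<lfloor>(y \<bullet> b - q \<bullet> b) / ?h\<rfloor> \<longleftrightarrow>
      ?c \<bullet> b \<le> w \<bullet> b \<and> w \<bullet> b < ?c \<bullet> b + ?h" if "b \<in> Basis" for b w
    unfolding c[OF that] fl by (auto simp: algebra_simps)
  then show ?thesis
    unfolding dyadic_cube_def half_open_cube_def dyadic_index_def restrict_def fun_eq_iff by auto
qed

lemma dyadic_cube_0_anchor: "s > 0 \<Longrightarrow> dyadic_cube q s 0 q = half_open_cube q s"
  by (simp add: dyadic_cube_eq_half_open_cube euclidean_representation)

lemma One_inner_Basis: "b \<in> Basis \<Longrightarrow> One \<bullet> b = 1"
  by (simp add: inner_sum_left inner_Basis)

lemma box_subset_half_open_cube: "box c (c + h *\<^sub>R One) \<subseteq> half_open_cube c h"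
  by (fastforce simp: mem_box half_open_cube_def inner_add_left One_inner_Basis)

lemma half_open_cube_subset_cbox: "half_open_cube c h \<subseteq> cbox c (c + h *\<^sub>R One)"
  by (fastforce simp: mem_box half_open_cube_def inner_add_left One_inner_Basis)

lemma cbox_One_mono:
  assumes "0 \<le> u" "u \<le> v"
  shows "cbox c (c + u *\<^sub>R One) \<subseteq> cbox c (c + v *\<^sub>R One)"
  using assms by (fastforce simp: mem_box inner_add_left One_inner_Basis)

lemma half_open_cube_measurable [measurable]: "half_open_cube c h \<in> sets borel"
  unfolding half_open_cube_def by measurable

lemma measure_cbox_One:
  fixes c :: "'a::euclidean_space"
  shows "h \<ge> 0 \<Longrightarrow> measure lborel (cbox c (c + h *\<^sub>R One)) = h ^ DIM('a)"
  by (simp add: inner_add_left One_inner_Basis prod_constant)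

lemma measure_half_open_cube:
  fixes c :: "'a::euclidean_space"
  assumes "h \<ge> 0"
  shows "measure lborel (half_open_cube c h) = h ^ DIM('a)"
proof (rule antisym)
  show "measure lborel (half_open_cube c h) \<le> h ^ DIM('a)"
    using half_open_cube_subset_cbox measure_cbox_One[OF assms]
    by (metis fmeasurable_cbox half_open_cube_measurable measure_mono_fmeasurable sets_lborel)
  have "measure lborel (box c (c + h *\<^sub>R One)) = h ^ DIM('a)"
    using assms by (simp add: inner_add_left One_inner_Basis)
  then show "h ^ DIM('a) \<le> measure lborel (half_open_cube c h)"
    using box_subset_half_open_cube half_open_cube_subset_cbox
    by (metis fmeasurable_cbox fmeasurableI2 half_open_cube_measurable measure_mono_fmeasurable
        sets_lborel borel_open open_box)
qed

lemma dyadic_cube_measurable [measurable]: "s > 0 \<Longrightarrow> dyadic_cube q s k y \<in> sets borel"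
  by (simp add: dyadic_cube_eq_half_open_cube)

lemma measure_dyadic_cube:
  fixes q :: "'a::euclidean_space"
  shows "s > 0 \<Longrightarrow> measure lborel (dyadic_cube q s k y) = (s / 2^k) ^ DIM('a)"
  by (simp add: dyadic_cube_eq_half_open_cube measure_half_open_cube)

lemma measure_dyadic_cube_Suc:
  fixes q :: "'a::euclidean_space"
  assumes "s > 0"
  shows "measure lborel (dyadic_cube q s k y) = 2 ^ DIM('a) * measure lborel (dyadic_cube q s (Suc k) y)"
proof -
  have "s / 2^k = 2 * (s / 2^Suc k)" by simp
  then have "(s / 2^k) ^ DIM('a) = 2 ^ DIM('a) * (s / 2^Suc k) ^ DIM('a)"
    by (metis power_mult_distrib)
  then show ?thesis
    using assms by (simp add: measure_dyadic_cube)
qed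

lemma dyadic_cube_subset_cbox:
  assumes "s > 0"
  obtains c where "dyadic_cube q s k y \<subseteq> cbox c (c + (s / 2^k) *\<^sub>R One)"
  by (rule that, subst dyadic_cube_eq_half_open_cube[OF assms], rule half_open_cube_subset_cbox)

lemma fmeasurable_dyadic_cube:
  assumes "s > 0"
  shows "dyadic_cube q s k y \<in> fmeasurable lborel"
proof -
  obtain c where "dyadic_cube q s k y \<subseteq> cbox c (c + (s / 2^k) *\<^sub>R One)"
    using dyadic_cube_subset_cbox[OF assms] .
  then show ?thesis
    using assms by (intro fmeasurableI2[OF fmeasurable_cbox]) auto
qed

lemma norm_diff_le_dyadic_cube:
  fixes q :: "'a::euclidean_space"
  assumes "s > 0" "w \<in> dyadic_cube q s k y"
  shows "norm (w - y) \<le> DIM('a) * (s / 2^k)"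
proof -
  obtain c where "dyadic_cube q s k y = half_open_cube c (s / 2^k)"
    using dyadic_cube_eq_half_open_cube[OF assms(1)] by blast
  then have "\<bar>(w - y) \<bullet> b\<bar> \<le> s / 2^k" if "b \<in> Basis" for b
    using that assms(2) dyadic_cube_self[of y q s k]
    by (fastforce simp: half_open_cube_def inner_diff_left abs_le_iff)
  then have "(\<Sum>b\<in>Basis. \<bar>(w - y) \<bullet> b\<bar>) \<le> (\<Sum>b\<in>(Basis::'a set). s / 2^k)"
    by (intro sum_mono)
  then show ?thesis using norm_le_l1[of "w - y"] by simp
qed

lemma countable_dyadic_cubes: "countable {dyadic_cube q s k y | k y. True}"
proof -
  have "{dyadic_cube q s k y | k y. True} \<subseteq>
      (\<lambda>(k, z). {w. dyadic_index q s k w = z}) ` (UNIV \<times> (Basis \<rightarrow>\<^sub>E (UNIV :: int set)))"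
  proof
    fix A assume "A \<in> {dyadic_cube q s k y | k y. True}"
    then obtain k y where "A = dyadic_cube q s k y" by blast
    moreover have "dyadic_index q s k y \<in> Basis \<rightarrow>\<^sub>E (UNIV :: int set)"
      by (simp add: dyadic_index_def)
    ultimately show "A \<in> (\<lambda>(k, z). {w. dyadic_index q s k w = z}) ` (UNIV \<times> (Basis \<rightarrow>\<^sub>E UNIV))"
      unfolding dyadic_cube_def by (intro image_eqI[where x = "(k, dyadic_index q s k y)"]) auto
  qed
  moreover have "countable (UNIV \<times> (Basis \<rightarrow>\<^sub>E (UNIV :: int set)) :: (nat \<times> ('a \<Rightarrow> int)) set)"
    by (intro countable_SIGMA countable_PiE) auto
  ultimately show ?thesis
    by (meson countable_image countable_subset)
qed

section \<open>Maximal dyadic cubes\<close>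

definition stopping_generation :: "'a::euclidean_space \<Rightarrow> real \<Rightarrow> ('a set \<Rightarrow> bool) \<Rightarrow> 'a \<Rightarrow> nat" where
  "stopping_generation q s P y = (LEAST k. P (dyadic_cube q s k y))"

definition maximal_dyadic_cubes :: "'a::euclidean_space \<Rightarrow> real \<Rightarrow> ('a set \<Rightarrow> bool) \<Rightarrow> 'a set set" where
  "maximal_dyadic_cubes q s P =
    {dyadic_cube q s (stopping_generation q s P y) y | y. \<exists>k. P (dyadic_cube q s k y)}"

lemma maximal_dyadic_cubesE:
  assumes "A \<in> maximal_dyadic_cubes q s P"
  obtains y m where "A = dyadic_cube q s m y" "P A" "\<And>k. k < m \<Longrightarrow> \<not> P (dyadic_cube q s k y)"
proof -
  from assms obtain y where A: "A = dyadic_cube q s (stopping_generation q s P y) y"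
    and ex: "\<exists>k. P (dyadic_cube q s k y)"
    unfolding maximal_dyadic_cubes_def by blast
  show thesis
  proof (rule that[OF A])
    show "P A" unfolding A stopping_generation_def by (rule LeastI_ex[OF ex])
    show "\<not> P (dyadic_cube q s k y)" if "k < stopping_generation q s P y" for k
      using that unfolding stopping_generation_def by (rule not_less_Least)
  qed
qed

lemma countable_maximal_dyadic_cubes: "countable (maximal_dyadic_cubes q s P)"
  by (rule countable_subset[OF _ countable_dyadic_cubes[of q s]]) (auto simp: maximal_dyadic_cubes_def)

lemma maximal_dyadic_cubes_measurable: "s > 0 \<Longrightarrow> maximal_dyadic_cubes q s P \<subseteq> sets lborel"
  by (auto simp: maximal_dyadic_cubes_def)

lemma Union_maximal_dyadic_cubes: "\<Union>(maximal_dyadic_cubes q s P) = {y. \<exists>k. P (dyadic_cube q s k y)}"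
proof
  show "\<Union>(maximal_dyadic_cubes q s P) \<subseteq> {y. \<exists>k. P (dyadic_cube q s k y)}"
  proof
    fix w assume "w \<in> \<Union>(maximal_dyadic_cubes q s P)"
    then obtain A where A: "A \<in> maximal_dyadic_cubes q s P" "w \<in> A" by blast
    from A(1) obtain y m where Ay: "A = dyadic_cube q s m y" "P A" by (rule maximal_dyadic_cubesE)
    have "dyadic_cube q s m w = A" using A(2) unfolding Ay(1) by (rule dyadic_cube_eq)
    then have "P (dyadic_cube q s m w)" using Ay(2) by simp
    then show "w \<in> {y. \<exists>k. P (dyadic_cube q s k y)}" by blast
  qed
  show "{y. \<exists>k. P (dyadic_cube q s k y)} \<subseteq> \<Union>(maximal_dyadic_cubes q s P)"
    using dyadic_cube_self unfolding maximal_dyadic_cubes_def by blast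
qed

text \<open>If two maximal cubes meet, the one of later generation lies inside the other, whose
  stopping condition therefore holds at the earlier generation too.\<close>
lemma maximal_dyadic_cubes_eq_if_meet:
  assumes s: "s > 0" and ex: "\<exists>k. P (dyadic_cube q s k y)" "\<exists>k. P (dyadic_cube q s k y')"
    and le: "stopping_generation q s P y \<le> stopping_generation q s P y'"
    and w: "w \<in> dyadic_cube q s (stopping_generation q s P y) y"
      "w \<in> dyadic_cube q s (stopping_generation q s P y') y'"
  shows "dyadic_cube q s (stopping_generation q s P y) y =
    dyadic_cube q s (stopping_generation q s P y') y'"
proof -
  let ?m = "stopping_generation q s P y" and ?m' = "stopping_generation q s P y'"
  have "dyadic_cube q s ?m' y' = dyadic_cube q s ?m' w" using dyadic_cube_eq[OF w(2)] by simp
  also have "\<dots> \<subseteq> dyadic_cube q s ?m w" by (rule dyadic_cube_antimono[OF s le])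
  also have "\<dots> = dyadic_cube q s ?m y" using dyadic_cube_eq[OF w(1)] .
  finally have "y' \<in> dyadic_cube q s ?m y" using dyadic_cube_self[of y' q s ?m'] by blast
  then have "dyadic_cube q s ?m y' = dyadic_cube q s ?m y" by (rule dyadic_cube_eq)
  moreover have "P (dyadic_cube q s ?m y)"
    using LeastI_ex[OF ex(1)] unfolding stopping_generation_def .
  ultimately have "?m' = ?m"
    using le Least_le[of "\<lambda>k. P (dyadic_cube q s k y')" ?m] unfolding stopping_generation_def by simp
  with \<open>dyadic_cube q s ?m y' = dyadic_cube q s ?m y\<close> show ?thesis by simp
qed

lemma disjoint_maximal_dyadic_cubes:
  assumes "s > 0"
  shows "disjoint (maximal_dyadic_cubes q s P)"
proof (rule disjointI)
  fix A B assume "A \<in> maximal_dyadic_cubes q s P" "B \<in> maximal_dyadic_cubes q s P" "A \<noteq> B"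
  then obtain y y' where y: "A = dyadic_cube q s (stopping_generation q s P y) y" "\<exists>k. P (dyadic_cube q s k y)"
    and y': "B = dyadic_cube q s (stopping_generation q s P y') y'" "\<exists>k. P (dyadic_cube q s k y')"
    unfolding maximal_dyadic_cubes_def by blast
  show "A \<inter> B = {}"
  proof (rule ccontr)
    assume "A \<inter> B \<noteq> {}"
    then obtain w where w: "w \<in> A" "w \<in> B" by blast
    show False
    proof (cases "stopping_generation q s P y \<le> stopping_generation q s P y'")
      case True
      then show False using maximal_dyadic_cubes_eq_if_meet[OF assms y(2) y'(2)] w y y' \<open>A \<noteq> B\<close> by simp
    next
      case False
      then show False using maximal_dyadic_cubes_eq_if_meet[OF assms y'(2) y(2)] w y y' \<open>A \<noteq> B\<close> by simp
    qed
  qed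
qed

lemma emeasure_Int_Union_le:
  fixes c :: ennreal
  assumes T: "countable T" "disjoint T" "T \<subseteq> sets M" and F: "F \<in> sets M"
    and le: "\<And>A. A \<in> T \<Longrightarrow> emeasure M (F \<inter> A) \<le> c * emeasure M A"
  shows "emeasure M (F \<inter> \<Union>T) \<le> c * emeasure M (\<Union>T)"
proof -
  have disj: "disjoint_family_on (\<lambda>A. A) T" "disjoint_family_on (\<lambda>A. F \<inter> A) T"
    using T(2) unfolding disjoint_family_on_def disjoint_def by auto
  have "emeasure M (F \<inter> \<Union>T) = emeasure M (\<Union>A\<in>T. F \<inter> A)" by (simp only: Int_Union)
  also have "\<dots> = (\<integral>\<^sup>+A. emeasure M (F \<inter> A) \<partial>count_space T)"
    using T F disj by (intro emeasure_UN_countable) auto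
  also have "\<dots> \<le> (\<integral>\<^sup>+A. c * emeasure M A \<partial>count_space T)"
    using le by (intro nn_integral_mono) auto
  also have "\<dots> = c * (\<integral>\<^sup>+A. emeasure M A \<partial>count_space T)"
    by (rule nn_integral_cmult) simp
  also have "(\<integral>\<^sup>+A. emeasure M A \<partial>count_space T) = emeasure M (\<Union>T)"
    using emeasure_UN_countable[of T "\<lambda>A. A" M] T(1) subsetD[OF T(3)] disj(1) by simp
  finally show ?thesis .
qed

lemma measure_Int_Union_le:
  assumes T: "countable T" "disjoint T" "T \<subseteq> sets M" and F: "F \<in> sets M"
    and fin: "emeasure M (\<Union>T) < \<infinity>" and c: "c \<ge> 0"
    and le: "\<And>A. A \<in> T \<Longrightarrow> measure M (F \<inter> A) \<le> c * measure M A"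
  shows "measure M (F \<inter> \<Union>T) \<le> c * measure M (\<Union>T)"
proof -
  have UT: "\<Union>T \<in> sets M" using T by (intro sets.countable_Union) auto
  have fin_sub: "emeasure M X = ennreal (measure M X)" if "X \<subseteq> \<Union>T" for X
    using order.strict_trans1[OF emeasure_mono[OF that UT] fin]
    by (simp add: emeasure_eq_ennreal_measure less_top)
  have "emeasure M (F \<inter> A) \<le> ennreal c * emeasure M A" if "A \<in> T" for A
  proof -
    have "A \<subseteq> \<Union>T" "F \<inter> A \<subseteq> \<Union>T" using that by blast+
    then show ?thesis
      unfolding fin_sub[OF \<open>A \<subseteq> \<Union>T\<close>] fin_sub[OF \<open>F \<inter> A \<subseteq> \<Union>T\<close>]
      using le[OF that] c by (simp add: ennreal_mult[symmetric] ennreal_leI)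
  qed
  then have "emeasure M (F \<inter> \<Union>T) \<le> ennreal c * emeasure M (\<Union>T)"
    by (rule emeasure_Int_Union_le[OF T F])
  then show ?thesis
    unfolding fin_sub[OF order.refl] fin_sub[OF Int_lower2]
    using c by (simp add: ennreal_mult[symmetric] ennreal_le_iff)
qed

lemma measure_Int_mono:
  assumes "A \<subseteq> B" "C \<subseteq> D" "A \<in> sets M" "C \<in> sets M" "B \<in> sets M" "D \<in> fmeasurable M"
  shows "measure M (A \<inter> C) \<le> measure M (B \<inter> D)"
proof (rule measure_mono_fmeasurable)
  show "A \<inter> C \<subseteq> B \<inter> D" using assms(1,2) by blast
  show "A \<inter> C \<in> sets M" using assms(3,4) by (rule sets.Int)
  show "B \<inter> D \<in> fmeasurable M"
    using fmeasurable_Int_fmeasurable[OF assms(6,5)] by (simp add: Int_commute)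
qed

lemma hl_max_mono:
  assumes "\<And>y. f y \<le> g y"
  shows "hl_max f x \<le> hl_max g x"
  unfolding hl_max_def
proof (rule SUP_mono)
  fix Q assume Q: "Q \<in> {Q \<in> cubes. x \<in> Q}"
  have "(\<integral>\<^sup>+ y. f y * indicator Q y \<partial>lborel) \<le> (\<integral>\<^sup>+ y. g y * indicator Q y \<partial>lborel)"
    using assms by (intro nn_integral_mono mult_right_mono) auto
  then show "\<exists>Q'\<in>{Q \<in> cubes. x \<in> Q}. (\<integral>\<^sup>+ y. f y * indicator Q y \<partial>lborel) / emeasure lborel Q
      \<le> (\<integral>\<^sup>+ y. g y * indicator Q' y \<partial>lborel) / emeasure lborel Q'"
    using Q by (intro bexI[of _ Q] divide_right_mono_ennreal) auto
qed

lemma hl_max_ge_cbox: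
  fixes c :: "'a::euclidean_space"
  assumes h: "h > 0" and x: "x \<in> cbox c (c + h *\<^sub>R One)" and V: "V \<ge> 0"
    and le: "ennreal V \<le> (\<integral>\<^sup>+ z. f z * indicator (cbox c (c + h *\<^sub>R One)) z \<partial>lborel)"
  shows "ennreal (V / h ^ DIM('a)) \<le> hl_max f x"
proof -
  let ?Q = "cbox c (c + h *\<^sub>R One)"
  have "emeasure lborel ?Q = ennreal (h ^ DIM('a))"
    using h measure_cbox_One[of h c] by (simp add: emeasure_eq_measure2)
  moreover have "ennreal (V / h ^ DIM('a)) = ennreal V / ennreal (h ^ DIM('a))"
    using h V by (simp add: divide_ennreal)
  ultimately have "ennreal (V / h ^ DIM('a)) \<le> (\<integral>\<^sup>+ z. f z * indicator ?Q z \<partial>lborel) / emeasure lborel ?Q"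
    using le by (simp add: divide_right_mono_ennreal)
  also have "\<dots> \<le> hl_max f x"
  proof -
    have "?Q \<in> cubes" unfolding cubes_def using h by blast
    then show ?thesis unfolding hl_max_def using x by (intro SUP_upper) simp
  qed
  finally show ?thesis .
qed

lemma hl_max_indicator_gt:
  fixes c :: "'a::euclidean_space"
  assumes h: "h > 0" and y: "y \<in> cbox c (c + h *\<^sub>R One)" and E [measurable]: "E \<in> sets borel"
    and t: "0 \<le> t" "t * h ^ DIM('a) < measure lborel (E \<inter> cbox c (c + h *\<^sub>R One))"
  shows "ennreal t < hl_max (indicator E) y"
proof -
  let ?Q = "cbox c (c + h *\<^sub>R One)"
  have "emeasure lborel (E \<inter> ?Q) = ennreal (measure lborel (E \<inter> ?Q))"
    by (intro emeasure_eq_measure2 fmeasurableI2[OF fmeasurable_cbox]) auto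
  then have "(\<integral>\<^sup>+ z. indicator E z * indicator ?Q z \<partial>lborel) = ennreal (measure lborel (E \<inter> ?Q))"
    by (simp flip: indicator_inter_arith)
  then have "ennreal (measure lborel (E \<inter> ?Q) / h ^ DIM('a)) \<le> hl_max (indicator E) y"
    by (intro hl_max_ge_cbox[OF h y]) auto
  moreover have "t < measure lborel (E \<inter> ?Q) / h ^ DIM('a)"
    using t h by (simp add: field_simps)
  then have "ennreal t < ennreal (measure lborel (E \<inter> ?Q) / h ^ DIM('a))"
    using t(1) by (intro ennreal_lessI) auto
  ultimately show ?thesis
    by (rule order.strict_trans2[rotated])
qed

lemma hl_max_indicator_gt_dyadic_cube:
  assumes s: "s > 0" and y: "y \<in> dyadic_cube q s k w" and F [measurable]: "F \<in> sets borel"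
    and t: "0 \<le> t" "t * measure lborel (dyadic_cube q s k w) < measure lborel (F \<inter> dyadic_cube q s k w)"
  shows "ennreal t < hl_max (indicator F) y"
proof -
  obtain c where D: "dyadic_cube q s k w \<subseteq> cbox c (c + (s / 2^k) *\<^sub>R One)"
    using dyadic_cube_subset_cbox[OF s] .
  have "measure lborel (F \<inter> dyadic_cube q s k w) \<le> measure lborel (F \<inter> cbox c (c + (s / 2^k) *\<^sub>R One))"
    using D s by (intro measure_mono_fmeasurable fmeasurableI2[OF fmeasurable_cbox]) auto
  with t(2) have "t * (s / 2^k) ^ DIM('a) < measure lborel (F \<inter> cbox c (c + (s / 2^k) *\<^sub>R One))"
    using s by (simp add: measure_dyadic_cube)
  then show ?thesis
    using hl_max_indicator_gt[OF _ subsetD[OF D y] F t(1)] s by simp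
qed

section \<open>A weak density theorem and the Calderon-Zygmund decomposition\<close>

lemma Union_maximal_dyadic_cubes_open:
  fixes U :: "'a::euclidean_space set"
  assumes s: "s > 0" and U: "open U"
  shows "\<Union>(maximal_dyadic_cubes q s (\<lambda>P. P \<subseteq> U)) = U"
  unfolding Union_maximal_dyadic_cubes
proof (intro antisym subsetI CollectI)
  show "y \<in> U" if "y \<in> {y. \<exists>k. dyadic_cube q s k y \<subseteq> U}" for y
    using that dyadic_cube_self by blast
  fix y assume "y \<in> U"
  then obtain r where r: "r > 0" "ball y r \<subseteq> U" using U open_contains_ball by blast
  have ds: "DIM('a) * s > 0" using s by simp
  obtain k where "(1/2::real) ^ k < r / (DIM('a) * s)"
    using real_arch_pow_inv[of "r / (DIM('a) * s)" "1/2"] r ds by auto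
  then have "DIM('a) * (s / 2^k) < r"
    using ds by (simp add: field_simps power_one_over)
  then have "dyadic_cube q s k y \<subseteq> ball y r"
    using norm_diff_le_dyadic_cube[OF s] by (fastforce simp: dist_norm norm_minus_commute)
  then show "\<exists>k. dyadic_cube q s k y \<subseteq> U" using r(2) by blast
qed

lemma measure_le_if_dyadic_density_le:
  fixes G :: "'a::euclidean_space set"
  assumes s: "s > 0" and G [measurable]: "G \<in> sets borel" and t: "0 \<le> t"
    and U: "open U" "G \<subseteq> U" "emeasure lborel U < \<infinity>"
    and density: "\<And>w k. w \<in> G \<Longrightarrow>
      measure lborel (G \<inter> dyadic_cube q s k w) \<le> t * measure lborel (dyadic_cube q s k w)"
  shows "measure lborel G \<le> t * measure lborel U"
proof -
  let ?T = "maximal_dyadic_cubes q s (\<lambda>P. P \<subseteq> U)"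
  have UT: "\<Union>?T = U" by (rule Union_maximal_dyadic_cubes_open[OF s U(1)])
  have "measure lborel (G \<inter> P) \<le> t * measure lborel P" if P: "P \<in> ?T" for P
  proof (cases "G \<inter> P = {}")
    case False
    then obtain w where w: "w \<in> G" "w \<in> P" by blast
    from P obtain y m where "P = dyadic_cube q s m y" by (rule maximal_dyadic_cubesE)
    then have "P = dyadic_cube q s m w" using dyadic_cube_eq[of w q s m y] w(2) by simp
    then show ?thesis using density[OF w(1)] by simp
  qed (use t in simp)
  then have "measure lborel (G \<inter> \<Union>?T) \<le> t * measure lborel (\<Union>?T)"
    using U(3) t UT
    by (intro measure_Int_Union_le[OF countable_maximal_dyadic_cubes
          disjoint_maximal_dyadic_cubes[OF s] maximal_dyadic_cubes_measurable[OF s]]) auto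
  then show ?thesis using U(2) by (simp add: UT Int_absorb2)
qed

text \<open>A weak form of the Lebesgue density theorem, from outer regularity.\<close>
lemma measure_zero_if_dyadic_density_le:
  fixes G :: "'a::euclidean_space set"
  assumes s: "s > 0" and G [measurable]: "G \<in> sets borel" "emeasure lborel G < \<infinity>"
    and t: "0 \<le> t" "t < 1"
    and density: "\<And>w k. w \<in> G \<Longrightarrow>
      measure lborel (G \<inter> dyadic_cube q s k w) \<le> t * measure lborel (dyadic_cube q s k w)"
  shows "measure lborel G = 0"
proof -
  have "(1 - t) * measure lborel G \<le> 0 + e" if e: "e > 0" for e
  proof -
    obtain U where U: "open U" "G \<subseteq> U" "emeasure lborel (U - G) \<le> ennreal e"
      using outer_regular_lborel_le[OF G(1) e] .
    have "emeasure lborel U \<le> emeasure lborel G + emeasure lborel (U - G)"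
      using U(1) by (intro emeasure_subadditive[THEN order_trans[rotated]] emeasure_mono) auto
    moreover have "emeasure lborel (U - G) < \<infinity>"
      using le_less_trans[OF U(3) ennreal_less_top] by simp
    ultimately have Ufin: "emeasure lborel U < \<infinity>"
      using G(2) by (simp add: order.strict_trans1)
    then have "U \<in> fmeasurable lborel" using U(1) by (simp add: fmeasurable_def)
    then have "measure lborel U = measure lborel G + measure lborel (U - G)"
      using measurable_measure_Diff[of U lborel G] U(2) by simp
    moreover have "measure lborel G \<le> t * measure lborel U"
      using measure_le_if_dyadic_density_le[OF s G(1) t(1) U(1,2) Ufin density] .
    moreover have "measure lborel (U - G) \<le> e"
      using U(3) e by (simp add: measure_def enn2real_leI)
    then have "t * measure lborel (U - G) \<le> e"
      using mult_mono[of t 1 "measure lborel (U - G)" e] t by simp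
    ultimately show ?thesis by (simp add: algebra_simps)
  qed
  then have "(1 - t) * measure lborel G \<le> 0" by (rule field_le_epsilon)
  then show ?thesis using t(2) by (simp add: mult_le_0_iff measure_nonneg antisym)
qed

lemma dyadic_cube_0_eq_if_dense:
  assumes s: "s > 0" and FQ: "F \<subseteq> half_open_cube q s" and t: "0 \<le> t"
    and dense: "t * measure lborel (dyadic_cube q s k y) < measure lborel (F \<inter> dyadic_cube q s k y)"
  shows "dyadic_cube q s 0 y = half_open_cube q s"
proof -
  have "0 \<le> t * measure lborel (dyadic_cube q s k y)" using t by simp
  with dense have "F \<inter> dyadic_cube q s k y \<noteq> {}" by auto
  then obtain w where w: "w \<in> F" "w \<in> dyadic_cube q s k y" by blast
  have "w \<in> dyadic_cube q s 0 y" using w(2) dyadic_cube_antimono[OF s, of 0 k] by blast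
  then have "dyadic_cube q s 0 y = dyadic_cube q s 0 w" by (simp add: dyadic_cube_eq)
  also have "w \<in> dyadic_cube q s 0 q" using w(1) FQ dyadic_cube_0_anchor[OF s] by blast
  then have "dyadic_cube q s 0 w = dyadic_cube q s 0 q" by (rule dyadic_cube_eq)
  finally show ?thesis using dyadic_cube_0_anchor[OF s] by simp
qed

lemma measure_Int_maximal_dense_cube_le:
  fixes F :: "'a::euclidean_space set"
  assumes s: "s > 0" and F [measurable]: "F \<in> sets borel"
    and P: "P \<in> maximal_dyadic_cubes q s (\<lambda>P. t * measure lborel P < measure lborel (F \<inter> P))"
    and gen0: "\<And>y. measure lborel (F \<inter> dyadic_cube q s 0 y) \<le> t * measure lborel (dyadic_cube q s 0 y)"
  shows "measure lborel (F \<inter> P) \<le> 2 ^ DIM('a) * t * measure lborel P"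
proof -
  from P obtain y m where P_eq: "P = dyadic_cube q s m y"
    and dense: "t * measure lborel P < measure lborel (F \<inter> P)"
    and maximal: "\<And>k. k < m \<Longrightarrow> measure lborel (F \<inter> dyadic_cube q s k y) \<le> t * measure lborel (dyadic_cube q s k y)"
    by (rule maximal_dyadic_cubesE) (auto simp: not_less)
  have "m \<noteq> 0"
  proof
    assume "m = 0"
    with dense gen0[of y] show False unfolding P_eq \<open>m = 0\<close> by linarith
  qed
  then obtain m' where m': "m = Suc m'" using not0_implies_Suc by blast
  have "measure lborel (F \<inter> P) \<le> measure lborel (F \<inter> dyadic_cube q s m' y)"
    unfolding P_eq m' using s
    by (intro measure_Int_mono dyadic_cube_Suc_subset fmeasurable_dyadic_cube) auto
  also have "\<dots> \<le> t * measure lborel (dyadic_cube q s m' y)"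
    using maximal m' by simp
  also have "\<dots> = 2 ^ DIM('a) * t * measure lborel P"
    using measure_dyadic_cube_Suc[OF s, of q m' y] unfolding P_eq m' by simp
  finally show ?thesis .
qed

definition calderon_zygmund_set :: "'a::euclidean_space set \<Rightarrow> real \<Rightarrow> 'a \<Rightarrow> real \<Rightarrow> 'a set" where
  "calderon_zygmund_set F t q s =
    \<Union>(maximal_dyadic_cubes q s (\<lambda>P. t * measure lborel P < measure lborel (F \<inter> P)))"

lemma calderon_zygmund_set_eq:
  "calderon_zygmund_set F t q s =
    {y. \<exists>k. t * measure lborel (dyadic_cube q s k y) < measure lborel (F \<inter> dyadic_cube q s k y)}"
  unfolding calderon_zygmund_set_def by (rule Union_maximal_dyadic_cubes)

lemma calderon_zygmund_set_measurable:
  "s > 0 \<Longrightarrow> calderon_zygmund_set F t q s \<in> sets lborel"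
  unfolding calderon_zygmund_set_def
  by (intro sets.countable_Union countable_maximal_dyadic_cubes maximal_dyadic_cubes_measurable)

lemma calderon_zygmund_set_subset:
  assumes "s > 0" "F \<subseteq> half_open_cube q s" "0 \<le> t"
  shows "calderon_zygmund_set F t q s \<subseteq> half_open_cube q s"
  using dyadic_cube_0_eq_if_dense[OF assms] dyadic_cube_self[of _ q s 0]
  unfolding calderon_zygmund_set_eq by blast

lemma hl_max_indicator_gt_calderon_zygmund_set:
  assumes "s > 0" "F \<in> sets borel" "0 \<le> t" "y \<in> calderon_zygmund_set F t q s"
  shows "ennreal t < hl_max (indicator F) y"
  using assms hl_max_indicator_gt_dyadic_cube[OF _ dyadic_cube_self]
  unfolding calderon_zygmund_set_eq by blast

lemma measure_Int_calderon_zygmund_set_le: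
  fixes F :: "'a::euclidean_space set"
  assumes s: "s > 0" and F [measurable]: "F \<in> sets borel" and FQ: "F \<subseteq> half_open_cube q s"
    and t: "0 \<le> t" and small: "measure lborel F \<le> t * s ^ DIM('a)"
  shows "measure lborel (F \<inter> calderon_zygmund_set F t q s)
    \<le> 2 ^ DIM('a) * t * measure lborel (calderon_zygmund_set F t q s)"
  unfolding calderon_zygmund_set_def
proof (rule measure_Int_Union_le[OF countable_maximal_dyadic_cubes
      disjoint_maximal_dyadic_cubes[OF s] maximal_dyadic_cubes_measurable[OF s]])
  have "emeasure lborel (calderon_zygmund_set F t q s) \<le> emeasure lborel (half_open_cube q s)"
    using calderon_zygmund_set_subset[OF s FQ t] by (rule emeasure_mono) simp
  also have "\<dots> < \<infinity>"
    using fmeasurableI2[OF fmeasurable_cbox half_open_cube_subset_cbox] by (simp add: fmeasurable_def)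
  finally show "emeasure lborel (\<Union>(maximal_dyadic_cubes q s
      (\<lambda>P. t * measure lborel P < measure lborel (F \<inter> P)))) < \<infinity>"
    unfolding calderon_zygmund_set_def .
  have "measure lborel (F \<inter> dyadic_cube q s 0 y) \<le> t * measure lborel (dyadic_cube q s 0 y)" for y
  proof (rule ccontr)
    assume "\<not> ?thesis"
    then have "t * measure lborel (dyadic_cube q s 0 y) < measure lborel (F \<inter> dyadic_cube q s 0 y)"
      by simp
    moreover from this have "dyadic_cube q s 0 y = half_open_cube q s"
      by (rule dyadic_cube_0_eq_if_dense[OF s FQ t])
    ultimately show False
      using small FQ s by (simp add: measure_half_open_cube Int_absorb2)
  qed
  then show "measure lborel (F \<inter> P) \<le> 2 ^ DIM('a) * t * measure lborel P"
    if "P \<in> maximal_dyadic_cubes q s (\<lambda>P. t * measure lborel P < measure lborel (F \<inter> P))" for P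
    by (rule measure_Int_maximal_dense_cube_le[OF s F that])
qed (use t in simp_all)

lemma measure_Diff_calderon_zygmund_set:
  fixes F :: "'a::euclidean_space set"
  assumes s: "s > 0" and F [measurable]: "F \<in> sets borel" and FQ: "F \<subseteq> half_open_cube q s"
    and t: "0 \<le> t" "t < 1"
  shows "measure lborel (F - calderon_zygmund_set F t q s) = 0"
proof (rule measure_zero_if_dyadic_density_le[OF s _ _ t])
  let ?A = "calderon_zygmund_set F t q s"
  have A [measurable]: "?A \<in> sets borel" using calderon_zygmund_set_measurable[OF s] by simp
  then show "F - ?A \<in> sets borel" by simp
  have "emeasure lborel (F - ?A) \<le> emeasure lborel (half_open_cube q s)"
    using FQ by (intro emeasure_mono) auto
  also have "\<dots> < \<infinity>"
    using fmeasurableI2[OF fmeasurable_cbox half_open_cube_subset_cbox] by (simp add: fmeasurable_def)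
  finally show "emeasure lborel (F - ?A) < \<infinity>" .
  fix w k assume "w \<in> F - ?A"
  then have "measure lborel (F \<inter> dyadic_cube q s k w) \<le> t * measure lborel (dyadic_cube q s k w)"
    unfolding calderon_zygmund_set_eq by (auto simp: not_less)
  moreover have "measure lborel ((F - ?A) \<inter> dyadic_cube q s k w) \<le> measure lborel (F \<inter> dyadic_cube q s k w)"
    using s by (intro measure_Int_mono fmeasurable_dyadic_cube) auto
  ultimately show "measure lborel ((F - ?A) \<inter> dyadic_cube q s k w) \<le> t * measure lborel (dyadic_cube q s k w)"
    by linarith
qed

lemma calderon_zygmund:
  fixes F :: "'a::euclidean_space set"
  assumes s: "s > 0" and F [measurable]: "F \<in> sets borel" and FQ: "F \<subseteq> half_open_cube q s"
    and t: "0 < t" "t < 1" and small: "measure lborel F \<le> t * s ^ DIM('a)"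
  obtains A where "A \<in> sets borel" "A \<subseteq> half_open_cube q s"
    "\<And>y. y \<in> A \<Longrightarrow> ennreal t < hl_max (indicator F) y"
    "measure lborel F \<le> 2 ^ DIM('a) * t * measure lborel A"
proof
  let ?A = "calderon_zygmund_set F t q s"
  show A: "?A \<in> sets borel" using calderon_zygmund_set_measurable[OF s] by simp
  show "?A \<subseteq> half_open_cube q s" using calderon_zygmund_set_subset[OF s FQ] t by simp
  show "ennreal t < hl_max (indicator F) y" if "y \<in> ?A" for y
    using hl_max_indicator_gt_calderon_zygmund_set[OF s F _ that] t by simp
  have "measure lborel F \<le> measure lborel (F \<inter> ?A) + measure lborel (F - ?A)"
    using measure_Un_le[of "F \<inter> ?A" lborel "F - ?A"] A by (simp add: Int_Diff_Un)
  also have "\<dots> \<le> 2 ^ DIM('a) * t * measure lborel ?A"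
    using measure_Int_calderon_zygmund_set_le[OF s F FQ _ small] measure_Diff_calderon_zygmund_set[OF s F FQ _ t(2)] t
    by simp
  finally show "measure lborel F \<le> 2 ^ DIM('a) * t * measure lborel ?A" .
qed

section \<open>Level sets and the main estimate\<close>

lemma exists_power2_bracket:
  fixes a b :: real
  assumes a: "0 < a" and ab: "a < b" and n: "n > 0"
  obtains j :: nat where "(2^j)^n * a < b" "b \<le> (2^Suc j)^n * a"
proof -
  obtain k :: nat where "b / a < 2^k" using real_arch_pow[of 2 "b / a"] by auto
  also have "(2::real)^k \<le> (2^k)^n" using n by (intro self_le_power) auto
  finally have ex: "b \<le> (2^k)^n * a" using a by (simp add: field_simps)
  define J where "J = (LEAST J. b \<le> (2^J)^n * a)"
  have J: "b \<le> (2^J)^n * a" unfolding J_def using ex by (rule LeastI)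
  have "J \<noteq> 0"
  proof
    assume "J = 0"
    with J ab show False by simp
  qed
  then obtain j where j: "J = Suc j" using not0_implies_Suc by blast
  then have "\<not> b \<le> (2^j)^n * a" unfolding J_def by (intro not_less_Least) simp
  then show ?thesis using that[of j] J j by (simp add: not_le)
qed

lemma hl_max_indicator_gt_enlarged_cube:
  fixes E F :: "'a::euclidean_space set"
  assumes s: "s > 0" and E [measurable]: "E \<in> sets borel" and F [measurable]: "F \<in> sets borel"
    and FEQ: "F \<subseteq> E \<inter> half_open_cube q s" and t: "0 \<le> t"
    and dense: "(2^j)^DIM('a) * (t * s^DIM('a)) < measure lborel F"
    and y: "y \<in> cbox q (q + (2^j * s) *\<^sub>R One)"
  shows "ennreal t < hl_max (indicator E) y"
proof (rule hl_max_indicator_gt[OF _ y E t])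
  let ?A = "cbox q (q + (2^j * s) *\<^sub>R One)"
  have "cbox q (q + s *\<^sub>R One) \<subseteq> ?A" using s by (intro cbox_One_mono) auto
  then have "F \<subseteq> E \<inter> ?A" using FEQ half_open_cube_subset_cbox[of q s] by blast
  moreover have "E \<inter> ?A \<in> fmeasurable lborel"
    by (subst Int_commute, rule fmeasurable_Int_fmeasurable[OF fmeasurable_cbox]) simp
  ultimately have "measure lborel F \<le> measure lborel (E \<inter> ?A)"
    by (intro measure_mono_fmeasurable) auto
  moreover have "t * (2^j * s)^DIM('a) = (2^j)^DIM('a) * (t * s^DIM('a))"
    by (simp add: power_mult_distrib)
  ultimately show "t * (2^j * s)^DIM('a) < measure lborel (E \<inter> ?A)"
    using dense by linarith
qed (use s in simp)

text \<open>Either the Calderon-Zygmund decomposition of \<open>F\<close> inside its cube, or a dyadically enlarged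
  cube in which \<open>E\<close> still has density above \<open>t\<close>.\<close>
lemma exists_level_set:
  fixes E F :: "'a::euclidean_space set"
  assumes s: "s > 0" and E [measurable]: "E \<in> sets borel" and F [measurable]: "F \<in> sets borel"
    and FEQ: "F \<subseteq> E \<inter> half_open_cube q s" and t: "0 < t" "t < 1"
    and J: "measure lborel F \<le> (2^J)^DIM('a) * t * s^DIM('a)"
  obtains A where "A \<in> sets borel" "A \<subseteq> cbox q (q + (2^J * s) *\<^sub>R One)"
    "\<And>y. y \<in> A \<Longrightarrow> ennreal t < hl_max (indicator E) y"
    "measure lborel F \<le> 2^DIM('a) * t * measure lborel A"
proof (cases "measure lborel F \<le> t * s^DIM('a)")
  case True
  obtain A where A: "A \<in> sets borel" "A \<subseteq> half_open_cube q s"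
    "\<And>y. y \<in> A \<Longrightarrow> ennreal t < hl_max (indicator F) y"
    "measure lborel F \<le> 2^DIM('a) * t * measure lborel A"
    using calderon_zygmund[OF s F _ t True] FEQ by blast
  have "A \<subseteq> cbox q (q + (2^J * s) *\<^sub>R One)"
    using A(2) half_open_cube_subset_cbox cbox_One_mono[of s "2^J * s" q] s by fastforce
  moreover have "hl_max (indicator F) y \<le> hl_max (indicator E) y" for y
    using FEQ by (intro hl_max_mono) (auto split: split_indicator)
  ultimately show ?thesis
    using that[OF A(1) _ _ A(4)] A(3) order.strict_trans2 by blast
next
  case False
  then have "0 < t * s^DIM('a)" "t * s^DIM('a) < measure lborel F" using t s by auto
  then obtain j where j: "(2^j)^DIM('a) * (t * s^DIM('a)) < measure lborel F"
    "measure lborel F \<le> (2^Suc j)^DIM('a) * (t * s^DIM('a))"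
    by (rule exists_power2_bracket[where n = "DIM('a)"]) (auto simp: DIM_positive)
  let ?A = "cbox q (q + (2^j * s) *\<^sub>R One)"
  have "(2^j)^DIM('a) * (t * s^DIM('a)) < ((2::real)^J)^DIM('a) * (t * s^DIM('a))"
    using j(1) J by (simp add: mult.assoc)
  then have "((2::real)^j)^DIM('a) < (2^J)^DIM('a)"
    using t s by simp
  then have "(2::real)^j < 2^J" by (rule power_less_imp_less_base) simp
  then have A_sub: "?A \<subseteq> cbox q (q + (2^J * s) *\<^sub>R One)" using s by (intro cbox_One_mono) auto
  have A_gt: "ennreal t < hl_max (indicator E) y" if "y \<in> ?A" for y
    using hl_max_indicator_gt_enlarged_cube[OF s E F FEQ _ j(1) that] t by simp
  have "measure lborel ?A = (2^j)^DIM('a) * s^DIM('a)"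
    using s by (simp add: measure_cbox_One power_mult_distrib)
  then have "measure lborel F \<le> 2^DIM('a) * t * measure lborel ?A"
    using j(2) by (simp add: power_mult_distrib mult_ac)
  then show ?thesis using that[OF _ A_sub A_gt] by simp
qed

lemma exists_dyadic_levels_above:
  fixes l :: real
  assumes l: "0 < l" "l < 1"
  obtains N :: nat where "\<And>k. k \<le> N \<Longrightarrow> l < (1/2)^k" "- ln l \<le> real N + 1"
proof -
  obtain n :: nat where "(1/2::real)^n < l" using real_arch_pow_inv[of l "1/2"] l by auto
  then have ex: "(1/2::real)^n \<le> l" by simp
  define n0 where "n0 = (LEAST n. (1/2::real)^n \<le> l)"
  have n0: "(1/2::real)^n0 \<le> l" unfolding n0_def using ex by (rule LeastI)
  have below: "l < (1/2)^k" if "k < n0" for k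
    using not_less_Least[OF that[unfolded n0_def]] by simp
  have "n0 \<noteq> 0" using n0 l by (intro notI) simp
  then obtain N where N: "n0 = Suc N" using not0_implies_Suc by blast
  have "- ln l \<le> - ln ((1/2)^Suc N)" using n0 N l by simp
  also have "\<dots> = real (Suc N) * ln 2" by (simp add: ln_realpow ln_div algebra_simps)
  also have "\<dots> \<le> real (Suc N)" using mult_left_mono[of "ln 2" 1 "real (Suc N)"] ln_2_less_1 by simp
  finally show ?thesis using that[of N] below N by (simp add: less_Suc_eq_le)
qed

text \<open>At \<open>y\<close> the sum is dominated by the geometric tail starting at the least \<open>k\<close> with \<open>y \<in> A k\<close>.\<close>
lemma sum_geometric_indicators_le:
  fixes h :: "'a \<Rightarrow> ennreal"
  assumes K: "finite K" and above: "\<And>k. k \<in> K \<Longrightarrow> y \<in> A k \<Longrightarrow> ennreal ((1/2)^k) < h y"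
  shows "(\<Sum>k\<in>K. ennreal ((1/2)^(k+1)) * indicator (A k) y) \<le> h y"
proof (cases "\<exists>k\<in>K. y \<in> A k")
  case True
  define Ky where "Ky = {k \<in> K. y \<in> A k}"
  have Ky: "finite Ky" "Ky \<noteq> {}" using K True unfolding Ky_def by auto
  define m where "m = Min Ky"
  have m: "m \<in> Ky" "\<And>k. k \<in> Ky \<Longrightarrow> m \<le> k" using Ky unfolding m_def by auto
  define n where "n = Max Ky"
  have "Ky \<subseteq> {m..n}" "m \<le> n" using Ky m unfolding n_def by auto
  have "(\<Sum>k\<in>K. ennreal ((1/2)^(k+1)) * indicator (A k) y) = (\<Sum>k\<in>Ky. ennreal ((1/2)^(k+1)))"
    unfolding Ky_def using K by (intro sum.mono_neutral_cong_right) (auto split: split_indicator)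
  also have "\<dots> \<le> (\<Sum>k\<in>{m..n}. ennreal ((1/2)^(k+1)))"
    using \<open>Ky \<subseteq> {m..n}\<close> by (intro sum_mono2) auto
  also have "\<dots> = ennreal (\<Sum>k\<in>{m..n}. (1/2)^(k+1))" by (simp add: sum_ennreal)
  also have "(\<Sum>k\<in>{m..n}. (1/2::real)^(k+1)) = (1/2) * (\<Sum>k\<in>{m..n}. (1/2)^k)"
    by (simp add: sum_distrib_left)
  also have "\<dots> = (1/2)^m - (1/2)^(n + 1)"
    using \<open>m \<le> n\<close> by (simp add: sum_gp)
  also have "ennreal ((1/2)^m - (1/2)^(n + 1)) \<le> ennreal ((1/2)^m)" by (intro ennreal_leI) simp
  also have "\<dots> \<le> h y" using above m(1) unfolding Ky_def by (auto intro: less_imp_le)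
  finally show ?thesis .
qed (auto split: split_indicator)

lemma nn_integral_sum_geometric_indicators_ge:
  assumes K: "finite K" and A: "\<And>k. k \<in> K \<Longrightarrow> A k \<in> sets M" and a: "0 \<le> a"
    and le: "\<And>k. k \<in> K \<Longrightarrow> ennreal a \<le> ennreal ((1/2)^k) * emeasure M (A k)"
  shows "ennreal (real (card K) * a / 2)
    \<le> (\<integral>\<^sup>+ y. (\<Sum>k\<in>K. ennreal ((1/2)^(k+1)) * indicator (A k) y) \<partial>M)"
proof -
  have "ennreal (real (card K) * a / 2) = (\<Sum>k\<in>K. ennreal (a / 2))"
    using a by (simp add: ennreal_of_nat_eq_real_of_nat ennreal_mult[symmetric])
  also have "\<dots> \<le> (\<Sum>k\<in>K. ennreal ((1/2)^(k+1)) * emeasure M (A k))"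
  proof (rule sum_mono)
    fix k assume "k \<in> K"
    have "ennreal (a / 2) = ennreal (1/2) * ennreal a" using ennreal_mult[of "1/2" a] a by simp
    also have "\<dots> \<le> ennreal (1/2) * (ennreal ((1/2)^k) * emeasure M (A k))"
      using le[OF \<open>k \<in> K\<close>] by (rule mult_left_mono) simp
    also have "\<dots> = ennreal ((1/2)^(k+1)) * emeasure M (A k)"
      using ennreal_mult[of "1/2" "(1/2)^k"] by (simp add: mult.assoc)
    finally show "ennreal (a / 2) \<le> ennreal ((1/2)^(k+1)) * emeasure M (A k)" .
  qed
  also have "\<dots> = (\<integral>\<^sup>+ y. (\<Sum>k\<in>K. ennreal ((1/2)^(k+1)) * indicator (A k) y) \<partial>M)"
    using A by (subst nn_integral_sum) (auto simp: nn_integral_cmult_indicator)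
  finally show ?thesis .
qed

definition truncated_hl_max :: "'a::euclidean_space set \<Rightarrow> real \<Rightarrow> 'a \<Rightarrow> ennreal" where
  "truncated_hl_max E l y = indicator {z. ennreal l < hl_max (indicator E) z} y * hl_max (indicator E) y"

text \<open>The integrand dominates the layers of the level sets of \<open>M \<chi>\<^sub>E\<close> at the heights \<open>2\<^sup>-\<^sup>k\<close>,
  \<open>1 \<le> k \<le> N\<close>, which \<open>exists_level_set\<close> places inside one cube.\<close>
lemma nn_integral_truncated_hl_max_ge:
  fixes E :: "'a::euclidean_space set"
  assumes s: "s > 0" and E [measurable]: "E \<in> sets borel"
    and l: "0 < l" "\<And>k. k \<le> N \<Longrightarrow> l < (1/2)^k"
    and J: "measure lborel (E \<inter> half_open_cube q s) \<le> (2^J)^DIM('a) * (l * s^DIM('a))"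
  shows "ennreal (real N * (measure lborel (E \<inter> half_open_cube q s) / 2^DIM('a)) / 2)
    \<le> (\<integral>\<^sup>+ y. truncated_hl_max E l y * indicator (cbox q (q + (2^J * s) *\<^sub>R One)) y \<partial>lborel)"
proof -
  let ?F = "E \<inter> half_open_cube q s" and ?R = "cbox q (q + (2^J * s) *\<^sub>R One)"
  have "\<exists>A. A \<in> sets borel \<and> A \<subseteq> ?R \<and> (\<forall>y\<in>A. ennreal ((1/2)^k) < hl_max (indicator E) y)
      \<and> measure lborel ?F \<le> 2^DIM('a) * (1/2)^k * measure lborel A" if k: "k \<in> {1..N}" for k
  proof -
    have t: "0 < (1/2::real)^k" "(1/2::real)^k < 1" using k by (auto simp: power_less_one_iff)
    have "(2^J)^DIM('a) * (l * s^DIM('a)) \<le> (2^J)^DIM('a) * (1/2)^k * s^DIM('a)"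
      using l(2)[of k] k s by (simp add: mult.assoc)
    with J have "measure lborel ?F \<le> (2^J)^DIM('a) * (1/2)^k * s^DIM('a)" by linarith
    then show ?thesis
      using exists_level_set[OF s E _ _ t, of ?F q J] by (metis Int_lower1 order.refl sets.Int half_open_cube_measurable E)
  qed
  then obtain A where A: "\<And>k. k \<in> {1..N} \<Longrightarrow> A k \<in> sets borel \<and> A k \<subseteq> ?R
      \<and> (\<forall>y\<in>A k. ennreal ((1/2)^k) < hl_max (indicator E) y)
      \<and> measure lborel ?F \<le> 2^DIM('a) * (1/2)^k * measure lborel (A k)"
    by metis
  have "ennreal (real (card {1..N}) * (measure lborel ?F / 2^DIM('a)) / 2)
      \<le> (\<integral>\<^sup>+ y. (\<Sum>k\<in>{1..N}. ennreal ((1/2)^(k+1)) * indicator (A k) y) \<partial>lborel)"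
  proof (rule nn_integral_sum_geometric_indicators_ge)
    fix k assume k: "k \<in> {1..N}"
    have "emeasure lborel (A k) = ennreal (measure lborel (A k))"
      using A[OF k] by (intro emeasure_eq_measure2 fmeasurableI2[OF fmeasurable_cbox]) auto
    moreover have "measure lborel ?F / 2^DIM('a) \<le> (1/2)^k * measure lborel (A k)"
      using A[OF k] by (simp add: field_simps)
    ultimately show "ennreal (measure lborel ?F / 2^DIM('a)) \<le> ennreal ((1/2)^k) * emeasure lborel (A k)"
      by (simp add: ennreal_mult'[symmetric] ennreal_leI)
  qed (use A in auto)
  also have "\<dots> \<le> (\<integral>\<^sup>+ y. truncated_hl_max E l y * indicator ?R y \<partial>lborel)"
  proof (intro nn_integral_mono sum_geometric_indicators_le)
    fix y k assume k: "k \<in> {1..N}" and y: "y \<in> A k"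
    then have "ennreal ((1/2)^k) < hl_max (indicator E) y" "y \<in> ?R" using A[OF k] by auto
    moreover have "ennreal l < ennreal ((1/2)^k)" using l k by (simp add: ennreal_lessI)
    ultimately show "ennreal ((1/2)^k) < truncated_hl_max E l y * indicator ?R y"
      by (simp add: truncated_hl_max_def)
  qed simp
  finally show ?thesis by simp
qed

lemma hl_max_truncated_ge_levels:
  fixes E :: "'a::euclidean_space set"
  assumes s: "s > 0" and E: "E \<in> sets borel" and l: "0 < l" "\<And>k. k \<le> N \<Longrightarrow> l < (1/2)^k"
    and x: "x \<in> cbox q (q + s *\<^sub>R One)"
    and dense: "l * s^DIM('a) < measure lborel (E \<inter> half_open_cube q s)"
  shows "ennreal (real N * l) \<le> ennreal (2^(2 * DIM('a) + 1)) * hl_max (truncated_hl_max E l) x"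
proof -
  let ?d = "DIM('a)" and ?\<phi> = "measure lborel (E \<inter> half_open_cube q s)"
  have "0 < l * s^?d" using l s by simp
  then obtain j where j: "(2^j)^?d * (l * s^?d) < ?\<phi>" "?\<phi> \<le> (2^Suc j)^?d * (l * s^?d)"
    using dense by (rule exists_power2_bracket[where n = ?d]) (auto simp: DIM_positive)
  let ?R = "cbox q (q + (2^Suc j * s) *\<^sub>R One)"
  define V where "V = real N * (?\<phi> / 2^?d) / 2"
  have "s \<le> 2^Suc j * s" using s one_le_power[of "2::real" "Suc j"] by simp
  then have "x \<in> ?R" using x cbox_One_mono[OF less_imp_le[OF s]] by blast
  moreover have "ennreal V \<le> (\<integral>\<^sup>+ y. truncated_hl_max E l y * indicator ?R y \<partial>lborel)"
    unfolding V_def using j(2) by (intro nn_integral_truncated_hl_max_ge[OF s E l])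
  ultimately have V: "ennreal (V / (2^Suc j * s)^?d) \<le> hl_max (truncated_hl_max E l) x"
    using s by (intro hl_max_ge_cbox) (auto simp: V_def)
  have "(2^Suc j * s)^?d = 2^?d * ((2^j)^?d * s^?d)"
    by (simp add: power_mult_distrib)
  then have "V / (2^Suc j * s)^?d = real N * ?\<phi> / (2^(2 * ?d + 1) * ((2^j)^?d * s^?d))"
    unfolding V_def by (simp add: power_add power_mult power2_eq_square field_simps)
  moreover have "real N * (l * ((2^j)^?d * s^?d)) \<le> real N * ?\<phi>"
    using j(1) by (intro mult_left_mono) (simp_all add: mult_ac)
  ultimately have "real N * l \<le> 2^(2 * ?d + 1) * (V / (2^Suc j * s)^?d)"
    using s by (simp add: field_simps)
  then have "ennreal (real N * l) \<le> ennreal (2^(2 * ?d + 1)) * ennreal (V / (2^Suc j * s)^?d)"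
    by (simp add: ennreal_mult'[symmetric] ennreal_leI)
  also have "\<dots> \<le> ennreal (2^(2 * ?d + 1)) * hl_max (truncated_hl_max E l) x"
    using V by (rule mult_left_mono) simp
  finally show ?thesis .
qed

lemma hl_max_truncated_ge_level:
  fixes E :: "'a::euclidean_space set"
  assumes h: "h > 0" and E [measurable]: "E \<in> sets borel" and x: "x \<in> cbox c (c + h *\<^sub>R One)"
    and l: "0 \<le> l" and dense: "l * h^DIM('a) < measure lborel (E \<inter> cbox c (c + h *\<^sub>R One))"
  shows "ennreal l \<le> hl_max (truncated_hl_max E l) x"
proof -
  let ?Q = "cbox c (c + h *\<^sub>R One)"
  have "ennreal l * indicator ?Q y \<le> truncated_hl_max E l y * indicator ?Q y" for y
  proof (cases "y \<in> ?Q")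
    case True
    then have "ennreal l < hl_max (indicator E) y"
      using hl_max_indicator_gt[OF h _ E l dense] by simp
    then show ?thesis using True by (simp add: truncated_hl_max_def)
  qed simp
  then have "(\<integral>\<^sup>+ y. ennreal l * indicator ?Q y \<partial>lborel) \<le> (\<integral>\<^sup>+ y. truncated_hl_max E l y * indicator ?Q y \<partial>lborel)"
    by (intro nn_integral_mono)
  moreover have "(\<integral>\<^sup>+ y. ennreal l * indicator ?Q y \<partial>lborel) = ennreal (l * h^DIM('a))"
    using h l measure_cbox_One[of h c] by (simp add: nn_integral_cmult_indicator emeasure_eq_measure2 ennreal_mult)
  ultimately have "ennreal (l * h^DIM('a) / h^DIM('a)) \<le> hl_max (truncated_hl_max E l) x"
    using h l by (intro hl_max_ge_cbox[OF h x]) auto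
  then show ?thesis using h by simp
qed

lemma hl_max_indicator_gt_obtains_cube:
  fixes E :: "'a::euclidean_space set"
  assumes gt: "ennreal l < hl_max (indicator E) x" and E [measurable]: "E \<in> sets borel" and l: "0 \<le> l"
  obtains c h where "h > 0" "x \<in> cbox c (c + h *\<^sub>R One)"
    "l * h^DIM('a) < measure lborel (E \<inter> cbox c (c + h *\<^sub>R One))"
proof -
  obtain Q where Q: "Q \<in> cubes" "x \<in> Q"
    and lQ: "ennreal l < (\<integral>\<^sup>+ z. indicator E z * indicator Q z \<partial>lborel) / emeasure lborel Q"
    using gt unfolding hl_max_def less_SUP_iff by blast
  obtain c h where h: "h > 0" and Q_eq: "Q = cbox c (c + h *\<^sub>R One)"
    using Q(1) unfolding cubes_def by blast
  let ?m = "measure lborel (E \<inter> Q)"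
  have "(\<integral>\<^sup>+ z. indicator E z * indicator Q z \<partial>lborel) = ennreal ?m"
    unfolding Q_eq
    by (simp flip: indicator_inter_arith, intro emeasure_eq_measure2 fmeasurableI2[OF fmeasurable_cbox]) auto
  moreover have "emeasure lborel Q = ennreal (h^DIM('a))"
    unfolding Q_eq using h measure_cbox_One[of h c] by (simp add: emeasure_eq_measure2)
  ultimately have "ennreal l < ennreal (?m / h^DIM('a))"
    using lQ h by (simp add: divide_ennreal)
  then have "l < ?m / h^DIM('a)" using l by (simp add: ennreal_less_iff)
  then show ?thesis using that[OF h] Q(2) h unfolding Q_eq by (simp add: field_simps)
qed

lemma measure_Int_cbox_le_half_open_cube:
  assumes E [measurable]: "E \<in> sets borel"
  shows "measure lborel (E \<inter> cbox c (c + h *\<^sub>R One)) \<le> measure lborel (E \<inter> half_open_cube c h)"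
proof -
  let ?N = "cbox c (c + h *\<^sub>R One) - box c (c + h *\<^sub>R One)"
  have "E \<inter> cbox c (c + h *\<^sub>R One) \<subseteq> (E \<inter> half_open_cube c h) \<union> ?N"
    using box_subset_half_open_cube by blast
  moreover have "(E \<inter> half_open_cube c h) \<union> ?N \<in> fmeasurable lborel"
    using half_open_cube_subset_cbox by (intro fmeasurableI2[OF fmeasurable_cbox]) auto
  ultimately have "measure lborel (E \<inter> cbox c (c + h *\<^sub>R One)) \<le> measure lborel ((E \<inter> half_open_cube c h) \<union> ?N)"
    by (intro measure_mono_fmeasurable) auto
  also have "\<dots> = measure lborel (E \<inter> half_open_cube c h)"
    using null_sets_cbox_Diff_box by (intro measure_Un_null_set) auto
  finally show ?thesis .
qed

text \<open>Two lower bounds combine: \<open>\<lambda>\<close> from the cube where \<open>E\<close> is dense, and \<open>N\<lambda>\<close> from the \<open>N \<approx> -log\<^sub>2 \<lambda>\<close>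
  dyadic levels between \<open>\<lambda>\<close> and \<open>1\<close>.\<close>
lemma truncated_hl_max_lower_bound:
  fixes E :: "'a::euclidean_space set"
  assumes E: "E \<in> sets borel" and l: "0 < l" "l < 1" and x: "ennreal l < hl_max (indicator E) x"
  shows "ennreal (l * (1 - ln l)) \<le> ennreal (2^(2 * DIM('a) + 2)) * hl_max (truncated_hl_max E l) x"
proof -
  let ?B = "(2::real)^(2 * DIM('a) + 1)" and ?X = "hl_max (truncated_hl_max E l) x"
  obtain q s where s: "s > 0" and xQ: "x \<in> cbox q (q + s *\<^sub>R One)"
    and dense: "l * s^DIM('a) < measure lborel (E \<inter> cbox q (q + s *\<^sub>R One))"
    by (rule hl_max_indicator_gt_obtains_cube[OF x E less_imp_le[OF l(1)]])
  obtain N where N: "\<And>k. k \<le> N \<Longrightarrow> l < (1/2)^k" "- ln l \<le> real N + 1"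
    using exists_dyadic_levels_above[OF l] by blast
  have level: "ennreal l \<le> ?X"
    using hl_max_truncated_ge_level[OF s E xQ _ dense] l by simp
  have levels: "ennreal (real N * l) \<le> ennreal ?B * ?X"
    using dense measure_Int_cbox_le_half_open_cube[OF E, of q s]
    by (intro hl_max_truncated_ge_levels[OF s E l(1) N(1) xQ]) auto
  have "l * (- ln l) \<le> l * (real N + 1)"
    using N(2) l by (intro mult_left_mono) auto
  then have "l * (1 - ln l) \<le> 2 * l + real N * l"
    by (simp add: algebra_simps)
  then have "ennreal (l * (1 - ln l)) \<le> ennreal (2 * l + real N * l)"
    by (rule ennreal_leI)
  also have "\<dots> = 2 * ennreal l + ennreal (real N * l)"
    using l by (simp add: ennreal_plus ennreal_mult)
  also have "\<dots> \<le> 2 * ?X + ennreal ?B * ?X"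
    using level levels by (intro add_mono mult_left_mono) auto
  also have "\<dots> \<le> ennreal ?B * ?X + ennreal ?B * ?X"
  proof -
    have "(2::real) \<le> ?B" using self_le_power[of 2 "2 * DIM('a) + 1"] by simp
    then have "(2::ennreal) \<le> ennreal ?B" using ennreal_leI by fastforce
    then show ?thesis by (intro add_mono mult_right_mono) auto
  qed
  also have "\<dots> = ennreal (2^(2 * DIM('a) + 2)) * ?X"
  proof -
    have "(2::real)^(2 * DIM('a) + 2) = ?B + ?B" by simp
    then have "ennreal (2^(2 * DIM('a) + 2)) = ennreal ?B + ennreal ?B"
      by (simp only: ennreal_plus zero_le_power zero_le_numeral)
    then show ?thesis by (simp only: distrib_right)
  qed
  finally show ?thesis .
qed

lemma one_le_ennreal_divide_mult:
  assumes V: "0 < V" and C: "0 \<le> C" and le: "ennreal V \<le> ennreal C * X"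
  shows "1 \<le> ennreal (C / V) * X"
proof -
  have "1 = ennreal (1 / V) * ennreal V"
    using V by (simp add: ennreal_mult[symmetric])
  also have "\<dots> \<le> ennreal (1 / V) * ennreal C * X"
    using le by (simp add: mult.assoc mult_left_mono)
  also have "ennreal (1 / V) * ennreal C = ennreal (C / V)"
    using V C by (simp add: ennreal_mult[symmetric])
  finally show ?thesis .
qed

theorem lemma2p2:
  shows "\<exists>C::real > 0. \<forall>l::real. 0 < l \<and> l < 1 \<longrightarrow>
    (\<forall>E::'a::euclidean_space set. E \<in> sets borel \<longrightarrow> (\<forall>x::'a.
      indicator {y. hl_max (indicator E) y > ennreal l} x
        \<le> ennreal (C / (l * (1 - ln l))) *
          hl_max (\<lambda>y. indicator {z. hl_max (indicator E) z > ennreal l} y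
                         * hl_max (indicator E) y) x))"
proof (intro exI[of _ "2^(2 * DIM('a) + 2)"] conjI allI impI)
  fix l :: real and E :: "'a set" and x :: 'a
  assume l: "0 < l \<and> l < 1" and E: "E \<in> sets borel"
  have "ln l < 0" using l by simp
  then have "0 < 1 - ln l" by linarith
  with l have V: "0 < l * (1 - ln l)" by simp
  have trunc: "(\<lambda>y. indicator {z. hl_max (indicator E) z > ennreal l} y * hl_max (indicator E) y)
      = truncated_hl_max E l"
    by (simp add: fun_eq_iff truncated_hl_max_def)
  show "indicator {y. hl_max (indicator E) y > ennreal l} x
      \<le> ennreal (2^(2 * DIM('a) + 2) / (l * (1 - ln l))) *
        hl_max (\<lambda>y. indicator {z. hl_max (indicator E) z > ennreal l} y * hl_max (indicator E) y) x"
  proof (cases "ennreal l < hl_max (indicator E) x")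
    case True
    with l show ?thesis
      using one_le_ennreal_divide_mult[OF V _ truncated_hl_max_lower_bound[OF E _ _ True]]
      by (simp add: trunc)
  qed simp
qed simp

end
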